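(* Let $R$ be a representation of $\mathbf{Q}$ with dimension vector $(1,4,1)$ which is either globally surjective but not locally injective, or globally injective but not locally surjective. Then for no $(\alpha,\gamma)\in\mathbb{R}^2$ is $R$ $\theta$-stable, where $\theta=(\alpha,-(\alpha+\gamma)/4,\gamma)$.
   Context: The quiver $\mathbf{Q}$ has vertices $-1,0,1$, arrows $\eta_0,\dots,\eta_3:-1\to0$, $\phi_0,\dots,\phi_3:0\to1$ and relations $\phi_i\eta_j+\phi_j\eta_i=0$; a representation consists of vector spaces $V_{-1},V_0,V_1$ and linear maps $f_i:V_{-1}\to V_0$, $g_i:V_0\to V_1$ with $g_if_j+g_jf_i=0$. $R$ is globally injective (resp. surjective) if $\sum\lambda_if_i$ is injective (resp. $\sum\lambda_ig_i$ surjective) for all $\lambda\in\mathbb{C}^4\setminus\{0\}$; locally injective (resp. surjective) if this holds for all $[\lambda]\in\mathbb{P}^3$ outside a closed subset of codimension at least 2. $R$ is $\theta$-stable if $\theta\cdot\dim R=0$ and $\theta\cdot\dim S<0$ for every nonzero proper subrepresentation $S$. *)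

theory Defs
  imports "HOL-Analysis.Analysis"
begin

text \<open>A representation of Q with dimension vector (1,4,1), in coordinates:
  V_{-1} = complex^1, V_0 = complex^4, V_1 = complex^1.
  The arrow eta_i acts by the 4x1 matrix F i, the arrow phi_i by the 1x4 matrix G i.\<close>

definition is_rep :: "(4 \<Rightarrow> complex^1^4) \<Rightarrow> (4 \<Rightarrow> complex^4^1) \<Rightarrow> bool" where
  "is_rep F G \<longleftrightarrow> (\<forall>i j. G i ** F j + G j ** F i = 0)"

definition sum_f :: "(4 \<Rightarrow> complex^1^4) \<Rightarrow> complex^4 \<Rightarrow> complex^1 \<Rightarrow> complex^4" where
  "sum_f F l = (\<lambda>x. \<Sum>i\<in>UNIV. l $ i *s (F i *v x))"

definition sum_g :: "(4 \<Rightarrow> complex^4^1) \<Rightarrow> complex^4 \<Rightarrow> complex^4 \<Rightarrow> complex^1" where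
  "sum_g G l = (\<lambda>v. \<Sum>i\<in>UNIV. l $ i *s (G i *v v))"

definition glob_inj :: "(4 \<Rightarrow> complex^1^4) \<Rightarrow> bool" where
  "glob_inj F \<longleftrightarrow> (\<forall>l. l \<noteq> 0 \<longrightarrow> inj (sum_f F l))"

definition glob_surj :: "(4 \<Rightarrow> complex^4^1) \<Rightarrow> bool" where
  "glob_surj G \<longleftrightarrow> (\<forall>l. l \<noteq> 0 \<longrightarrow> surj (sum_g G l))"

text \<open>Projective 3-space P^3 is modelled by nonzero vectors of complex^4 (points of P^3 =
  lines); subsets of P^3 are modelled by scaling-invariant sets of nonzero vectors.\<close>

inductive_set polyfun :: "(complex^4 \<Rightarrow> complex) set" where
  const: "(\<lambda>x. c) \<in> polyfun"
| coord: "(\<lambda>x. x $ i) \<in> polyfun"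
| add: "p \<in> polyfun \<Longrightarrow> q \<in> polyfun \<Longrightarrow> (\<lambda>x. p x + q x) \<in> polyfun"
| mult: "p \<in> polyfun \<Longrightarrow> q \<in> polyfun \<Longrightarrow> (\<lambda>x. p x * q x) \<in> polyfun"

definition homog_poly :: "(complex^4 \<Rightarrow> complex) \<Rightarrow> bool" where
  "homog_poly p \<longleftrightarrow> p \<in> polyfun \<and> (\<exists>d::nat. \<forall>t x. p (t *s x) = t ^ d * p x)"

definition proj_closed :: "(complex^4) set \<Rightarrow> bool" where
  "proj_closed Z \<longleftrightarrow> (\<exists>P. (\<forall>p\<in>P. homog_poly p) \<and> Z = {x. x \<noteq> 0 \<and> (\<forall>p\<in>P. p x = 0)})"

definition proj_irred :: "(complex^4) set \<Rightarrow> bool" where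
  "proj_irred Z \<longleftrightarrow> proj_closed Z \<and> Z \<noteq> {} \<and>
     (\<forall>A B. proj_closed A \<and> proj_closed B \<and> Z = A \<union> B \<longrightarrow> Z = A \<or> Z = B)"

definition proj_dim_ge :: "(complex^4) set \<Rightarrow> nat \<Rightarrow> bool" where
  "proj_dim_ge Z n \<longleftrightarrow> (\<exists>C :: nat \<Rightarrow> (complex^4) set.
      (\<forall>k\<le>n. proj_irred (C k) \<and> C k \<subseteq> Z) \<and> (\<forall>k<n. C k \<subset> C (Suc k)))"

text \<open>Codimension in P^3 (of dimension 3): codim Z \<ge> c iff dim Z \<le> 3 - c
  (the empty set has infinite codimension).\<close>
definition proj_codim_ge :: "(complex^4) set \<Rightarrow> nat \<Rightarrow> bool" where
  "proj_codim_ge Z c \<longleftrightarrow> (\<forall>n. proj_dim_ge Z n \<longrightarrow> n + c \<le> 3)"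

definition loc_inj :: "(4 \<Rightarrow> complex^1^4) \<Rightarrow> bool" where
  "loc_inj F \<longleftrightarrow> (\<exists>Z. proj_closed Z \<and> proj_codim_ge Z 2 \<and>
      (\<forall>l. l \<noteq> 0 \<and> l \<notin> Z \<longrightarrow> inj (sum_f F l)))"

definition loc_surj :: "(4 \<Rightarrow> complex^4^1) \<Rightarrow> bool" where
  "loc_surj G \<longleftrightarrow> (\<exists>Z. proj_closed Z \<and> proj_codim_ge Z 2 \<and>
      (\<forall>l. l \<noteq> 0 \<and> l \<notin> Z \<longrightarrow> surj (sum_g G l)))"

text \<open>Subrepresentations (S1, S0, S2) of (V_{-1}, V_0, V_1).\<close>
definition is_subrep :: "(4 \<Rightarrow> complex^1^4) \<Rightarrow> (4 \<Rightarrow> complex^4^1) \<Rightarrow>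
    (complex^1) set \<Rightarrow> (complex^4) set \<Rightarrow> (complex^1) set \<Rightarrow> bool" where
  "is_subrep F G S1 S0 S2 \<longleftrightarrow> vec.subspace S1 \<and> vec.subspace S0 \<and> vec.subspace S2 \<and>
     (\<forall>i. \<forall>x\<in>S1. F i *v x \<in> S0) \<and> (\<forall>i. \<forall>v\<in>S0. G i *v v \<in> S2)"

definition theta_pair :: "real \<times> real \<times> real \<Rightarrow> nat \<times> nat \<times> nat \<Rightarrow> real" where
  "theta_pair \<theta> d = fst \<theta> * real (fst d) + fst (snd \<theta>) * real (fst (snd d))
                    + snd (snd \<theta>) * real (snd (snd d))"

definition theta_stable :: "(4 \<Rightarrow> complex^1^4) \<Rightarrow> (4 \<Rightarrow> complex^4^1) \<Rightarrow> real \<times> real \<times> real \<Rightarrow> bool" where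
  "theta_stable F G \<theta> \<longleftrightarrow> theta_pair \<theta> (1, 4, 1) = 0 \<and>
     (\<forall>S1 S0 S2. is_subrep F G S1 S0 S2 \<and>
        (S1 \<noteq> {0} \<or> S0 \<noteq> {0} \<or> S2 \<noteq> {0}) \<and> (S1 \<noteq> UNIV \<or> S0 \<noteq> UNIV \<or> S2 \<noteq> UNIV)
        \<longrightarrow> theta_pair \<theta> (vec.dim S1, vec.dim S0, vec.dim S2) < 0)"

end

(*
  Write P i j for the scalar phi_i eta_j; the relations say exactly that the 4x4 matrix P
  is antisymmetric. If R is globally surjective, the matrix with columns phi_k is
  invertible, so eta <> 0 forces P <> 0. A nonzero antisymmetric matrix has two
  independent rows, so its kernel, which contains the points [lambda] where
  sum_k lambda_k eta_k fails to be injective, lies on a line of P^3; a subset of a line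
  has codimension at least 2, so R would be locally injective. Hence eta = 0, and dually
  phi = 0 in the other case. Then V_-1 and V_0 + V_1 (resp. V_1 and V_-1 + V_0) are
  proper subrepresentations whose dimension vectors add up to (1,4,1), so their
  theta-values add up to 0 and cannot both be negative.
*)

theory Submission
  imports Defs "HOL-Computational_Algebra.Polynomial"
begin

section \<open>Closed subsets of P^3\<close>

lemma polyfun_sum:
  "finite S \<Longrightarrow> (\<And>k. k \<in> S \<Longrightarrow> p k \<in> polyfun) \<Longrightarrow> (\<lambda>x. \<Sum>k\<in>S. p k x) \<in> polyfun"
proof (induction S rule: finite_induct)
  case empty
  show ?case using polyfun.const[of 0] by simp
next
  case (insert a S)
  then show ?case using polyfun.add[of "p a" "\<lambda>x. \<Sum>k\<in>S. p k x"] by simp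
qed

lemma homog_poly_linear_form: "homog_poly (\<lambda>x. \<Sum>k\<in>UNIV. c k * x $ k)"
  unfolding homog_poly_def
  by (auto intro!: polyfun_sum polyfun.mult polyfun.const polyfun.coord exI[of _ 1]
      simp: sum_distrib_left mult_ac)

lemma homog_polyE:
  assumes "homog_poly p" obtains d where "\<And>t x. p (t *s x) = t ^ d * p x"
  using assms unfolding homog_poly_def by blast

lemma homog_poly_mult:
  assumes "homog_poly p" "homog_poly q" shows "homog_poly (\<lambda>x. p x * q x)"
proof -
  obtain d e where "\<And>t x. p (t *s x) = t ^ d * p x" "\<And>t x. q (t *s x) = t ^ e * q x"
    using assms by (meson homog_polyE)
  then have "\<forall>t x. p (t *s x) * q (t *s x) = t ^ (d + e) * (p x * q x)"
    by (simp add: power_add mult_ac)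
  moreover have "(\<lambda>x. p x * q x) \<in> polyfun"
    using assms unfolding homog_poly_def by (blast intro: polyfun.mult)
  ultimately show ?thesis unfolding homog_poly_def by blast
qed

lemma proj_closedI:
  "(\<forall>p\<in>P. homog_poly p) \<Longrightarrow> Y = {x. x \<noteq> 0 \<and> (\<forall>p\<in>P. p x = 0)} \<Longrightarrow> proj_closed Y"
  unfolding proj_closed_def by blast

lemma proj_closedE:
  assumes "proj_closed Y"
  obtains P where "\<forall>p\<in>P. homog_poly p" "Y = {x. x \<noteq> 0 \<and> (\<forall>p\<in>P. p x = 0)}"
  using assms unfolding proj_closed_def by blast

lemma proj_closed_smult:
  assumes "proj_closed Y" "y \<in> Y" "c \<noteq> 0" shows "c *s y \<in> Y"
proof -
  obtain P where P: "\<forall>p\<in>P. homog_poly p" and Y: "Y = {x. x \<noteq> 0 \<and> (\<forall>p\<in>P. p x = 0)}"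
    using assms(1) by (rule proj_closedE)
  have "p (c *s y) = 0" if p: "p \<in> P" for p
  proof -
    obtain d where "\<And>t x. p (t *s x) = t ^ d * p x"
      using P p by (meson homog_polyE)
    then show ?thesis using assms(2) p unfolding Y by simp
  qed
  moreover have "c *s y \<noteq> 0" using assms(2,3) unfolding Y by (simp add: vec_eq_iff)
  ultimately show ?thesis unfolding Y by blast
qed

lemma proj_closed_empty: "proj_closed {}"
proof (rule proj_closedI)
  show "\<forall>p\<in>{\<lambda>x. 1}. homog_poly p"
    unfolding homog_poly_def by (auto intro: polyfun.const exI[of _ 0])
qed simp

lemma proj_closed_Un:
  assumes "proj_closed A" "proj_closed B" shows "proj_closed (A \<union> B)"
proof -
  obtain P where P: "\<forall>p\<in>P. homog_poly p" and A: "A = {x. x \<noteq> 0 \<and> (\<forall>p\<in>P. p x = 0)}"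
    using assms(1) by (rule proj_closedE)
  obtain Q where Q: "\<forall>q\<in>Q. homog_poly q" and B: "B = {x. x \<noteq> 0 \<and> (\<forall>q\<in>Q. q x = 0)}"
    using assms(2) by (rule proj_closedE)
  define R where "R = {(\<lambda>x. p x * q x) | p q. p \<in> P \<and> q \<in> Q}"
  have "\<forall>r\<in>R. homog_poly r" using P Q unfolding R_def by (auto intro!: homog_poly_mult)
  moreover have "A \<union> B = {x. x \<noteq> 0 \<and> (\<forall>r\<in>R. r x = 0)}"
  proof (intro set_eqI iffI)
    fix x assume "x \<in> A \<union> B"
    then show "x \<in> {x. x \<noteq> 0 \<and> (\<forall>r\<in>R. r x = 0)}" unfolding A B R_def by auto
  next
    fix x assume x: "x \<in> {x. x \<noteq> 0 \<and> (\<forall>r\<in>R. r x = 0)}"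
    have pq: "p x * q x = 0" if "p \<in> P" "q \<in> Q" for p q
    proof -
      have "(\<lambda>x. p x * q x) \<in> R" unfolding R_def using that by blast
      moreover have "\<forall>r\<in>R. r x = 0" using x by simp
      ultimately show ?thesis by (metis (no_types, lifting))
    qed
    show "x \<in> A \<union> B"
    proof (rule ccontr)
      assume "x \<notin> A \<union> B"
      then obtain p q where "p \<in> P" "p x \<noteq> 0" "q \<in> Q" "q x \<noteq> 0"
        using x unfolding A B by auto
      then show False using pq by force
    qed
  qed
  ultimately show ?thesis by (rule proj_closedI)
qed

lemma proj_closed_Int:
  assumes "proj_closed A" "proj_closed B" shows "proj_closed (A \<inter> B)"
proof -
  obtain P where P: "\<forall>p\<in>P. homog_poly p" and A: "A = {x. x \<noteq> 0 \<and> (\<forall>p\<in>P. p x = 0)}"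
    using assms(1) by (rule proj_closedE)
  obtain Q where Q: "\<forall>q\<in>Q. homog_poly q" and B: "B = {x. x \<noteq> 0 \<and> (\<forall>q\<in>Q. q x = 0)}"
    using assms(2) by (rule proj_closedE)
  have "\<forall>r\<in>P \<union> Q. homog_poly r" using P Q by blast
  moreover have "A \<inter> B = {x. x \<noteq> 0 \<and> (\<forall>r\<in>P \<union> Q. r x = 0)}" unfolding A B by blast
  ultimately show ?thesis by (rule proj_closedI)
qed

lemma proj_closed_kernel:
  fixes A :: "complex^4^'m"
  shows "proj_closed {x. x \<noteq> 0 \<and> A *v x = 0}"
proof -
  let ?P = "range (\<lambda>m x. \<Sum>k\<in>UNIV. A $ m $ k * x $ k)"
  have "\<forall>p\<in>?P. homog_poly p" by (auto intro: homog_poly_linear_form)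
  moreover have "{x. x \<noteq> 0 \<and> A *v x = 0} = {x. x \<noteq> 0 \<and> (\<forall>p\<in>?P. p x = 0)}"
    by (auto simp: vec_eq_iff matrix_vector_mult_def)
  ultimately show ?thesis by (rule proj_closedI)
qed

definition proj_point :: "complex^4 \<Rightarrow> (complex^4) set" where
  "proj_point x = {y. y \<noteq> 0 \<and> (\<exists>c. y = c *s x)}"

lemma proj_point_0: "proj_point 0 = {}"
  unfolding proj_point_def by auto

lemma proj_closed_point: "proj_closed (proj_point x)"
proof (cases "x = 0")
  case True
  then show ?thesis by (simp add: proj_point_0 proj_closed_empty)
next
  case False
  then obtain i where xi: "x $ i \<noteq> 0" by (auto simp: vec_eq_iff)
  \<comment> \<open>The point is cut out by the 2x2 minors of x and y.\<close>
  define A :: "complex^4^(4 \<times> 4)" where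
    "A = (\<chi> ij k. (if k = snd ij then x $ fst ij else 0) - (if k = fst ij then x $ snd ij else 0))"
  have minor: "(A *v y) $ (j, k) = x $ j * y $ k - x $ k * y $ j" for y j k
    by (simp add: A_def matrix_vector_mult_def left_diff_distrib sum_subtractf
        if_distrib[of "\<lambda>a. a * _"] cong: if_cong)
  have "proj_point x = {y. y \<noteq> 0 \<and> A *v y = 0}"
  proof (intro set_eqI iffI)
    fix y assume "y \<in> proj_point x"
    then show "y \<in> {y. y \<noteq> 0 \<and> A *v y = 0}"
      unfolding proj_point_def by (auto simp: vec_eq_iff minor)
  next
    fix y assume y: "y \<in> {y. y \<noteq> 0 \<and> A *v y = 0}"
    have "x $ i * y $ k = x $ k * y $ i" for k
      using y minor[of y i k] by (auto simp: vec_eq_iff)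
    then have "y = (y $ i / x $ i) *s x"
      using xi by (simp add: vec_eq_iff field_simps)
    then show "y \<in> proj_point x" using y unfolding proj_point_def by blast
  qed
  then show ?thesis using proj_closed_kernel by simp
qed

lemma proj_closed_Union_points: "finite X \<Longrightarrow> proj_closed (\<Union>(proj_point ` X))"
proof (induction X rule: finite_induct)
  case empty
  show ?case using proj_closed_empty by simp
next
  case (insert x X)
  then show ?case using proj_closed_Un[OF proj_closed_point] by simp
qed

lemma proj_closed_subset_point:
  assumes "proj_closed C" "C \<noteq> {}" "C \<subseteq> proj_point x" shows "C = proj_point x"
proof -
  obtain y where yC: "y \<in> C" using assms(2) by blast
  then obtain c where y: "y = c *s x" "y \<noteq> 0" using assms(3) unfolding proj_point_def by blast
  then have c: "c \<noteq> 0" by auto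
  have "z \<in> C" if z: "z \<in> proj_point x" for z
  proof -
    obtain c' where "z = c' *s x" "z \<noteq> 0" using z unfolding proj_point_def by blast
    then have "z = (c' / c) *s y" "c' / c \<noteq> 0" using y c by auto
    then show ?thesis using proj_closed_smult[OF assms(1) yC] by simp
  qed
  then show ?thesis using assms(3) by blast
qed

section \<open>Subsets of a line have codimension two\<close>

lemma polyfun_along_line: "p \<in> polyfun \<Longrightarrow> \<exists>Q. \<forall>s. p (s *s u + v) = poly Q s"
proof (induction rule: polyfun.induct)
  case (const c)
  show ?case by (rule exI[of _ "[:c:]"]) simp
next
  case (coord i)
  show ?case by (rule exI[of _ "[:v $ i, u $ i:]"]) (simp add: algebra_simps)
next
  case (add p q)
  then obtain P Q where "\<forall>s. p (s *s u + v) = poly P s" "\<forall>s. q (s *s u + v) = poly Q s" by blast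
  then show ?case by (intro exI[of _ "P + Q"]) simp
next
  case (mult p q)
  then obtain P Q where "\<forall>s. p (s *s u + v) = poly P s" "\<forall>s. q (s *s u + v) = poly Q s" by blast
  then show ?case by (intro exI[of _ "P * Q"]) simp
qed

lemma poly_eq_0_if_zero_off_0:
  fixes Q :: "'a::{idom, ring_char_0} poly"
  assumes "\<And>t. t \<noteq> 0 \<Longrightarrow> poly Q t = 0" shows "Q = 0"
proof (rule ccontr)
  assume "Q \<noteq> 0"
  then have "finite (insert 0 {t. poly Q t = 0})" using poly_roots_finite by blast
  moreover have "insert 0 {t. poly Q t = 0} = UNIV" using assms by blast
  ultimately show False by (metis infinite_UNIV_char_0)
qed

lemma smult_add_eq_smult_chart:
  fixes u v :: "'a::field^'n"
  assumes "t \<noteq> 0" shows "s *s u + t *s v = t *s ((s / t) *s u + v)"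
  using assms by (simp add: vec_eq_iff field_simps)

lemma homog_poly_zero_on_line:
  assumes hp: "homog_poly p" and zero: "\<And>s. p (s *s u + v) = 0"
  shows "p (s *s u + t *s v) = 0"
proof -
  obtain d where d: "\<And>t x. p (t *s x) = t ^ d * p x" using hp by (meson homog_polyE)
  have "p \<in> polyfun" using hp unfolding homog_poly_def by blast
  then obtain Q where "\<forall>r. p (r *s v + u) = poly Q r" using polyfun_along_line by blast
  then have Q: "p (r *s v + u) = poly Q r" for r by blast
  have "poly Q r = 0" if "r \<noteq> 0" for r
  proof -
    have "r *s v + u = r *s ((1 / r) *s u + v)" using that by (simp add: vec_eq_iff field_simps)
    then have "p (r *s v + u) = 0" by (simp only: d zero mult_zero_right)
    then show ?thesis unfolding Q .
  qed
  then have "Q = 0" by (rule poly_eq_0_if_zero_off_0)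
  then have "p u = 0" using Q[of 0] by simp
  show ?thesis
  proof (cases "t = 0")
    case True
    then show ?thesis using d \<open>p u = 0\<close> by simp
  next
    case False
    then show ?thesis by (simp only: smult_add_eq_smult_chart[OF False] d zero mult_zero_right)
  qed
qed

definition proj_line :: "complex^4 \<Rightarrow> complex^4 \<Rightarrow> (complex^4) set" where
  "proj_line u v = {w. w \<noteq> 0 \<and> (\<exists>s t. w = s *s u + t *s v)}"

lemma homog_poly_zeros_on_line_finite:
  assumes hp: "homog_poly p" and nonzero: "p (s\<^sub>0 *s u + v) \<noteq> 0"
  shows "\<exists>X. finite X \<and> {w \<in> proj_line u v. p w = 0} \<subseteq> \<Union>(proj_point ` X)"
proof -
  obtain d where d: "\<And>t x. p (t *s x) = t ^ d * p x" using hp by (meson homog_polyE)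
  have "p \<in> polyfun" using hp unfolding homog_poly_def by blast
  then obtain Q where "\<forall>s. p (s *s u + v) = poly Q s" using polyfun_along_line by blast
  then have Q: "p (s *s u + v) = poly Q s" for s by blast
  have "Q \<noteq> 0" using nonzero unfolding Q by auto
  \<comment> \<open>Away from the point u the line is the affine chart s u + v, on which p is Q.\<close>
  define X where "X = insert u ((\<lambda>r. r *s u + v) ` {r. poly Q r = 0})"
  have "finite X" unfolding X_def using poly_roots_finite[OF \<open>Q \<noteq> 0\<close>] by blast
  moreover have "w \<in> \<Union>(proj_point ` X)" if w: "w \<in> proj_line u v" "p w = 0" for w
  proof -
    obtain s t where st: "w = s *s u + t *s v" and "w \<noteq> 0"
      using w(1) unfolding proj_line_def by blast
    show ?thesis
    proof (cases "t = 0")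
      case True
      then have "w \<in> proj_point u" using st \<open>w \<noteq> 0\<close> unfolding proj_point_def by auto
      then show ?thesis unfolding X_def by blast
    next
      case False
      then have w_eq: "w = t *s ((s / t) *s u + v)"
        by (simp only: st smult_add_eq_smult_chart[OF False])
      then have "t ^ d * poly Q (s / t) = 0" using w(2) by (simp only: d Q)
      then have "poly Q (s / t) = 0" using False by simp
      moreover have "w \<in> proj_point ((s / t) *s u + v)"
        using w_eq \<open>w \<noteq> 0\<close> unfolding proj_point_def by blast
      ultimately show ?thesis unfolding X_def by blast
    qed
  qed
  ultimately show ?thesis by blast
qed

lemma proj_closed_subset_line_cases:
  assumes "proj_closed Y" "Y \<subseteq> proj_line u v"
  shows "Y = proj_line u v \<or> (\<exists>X. finite X \<and> Y \<subseteq> \<Union>(proj_point ` X))"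
proof -
  obtain P where P: "\<forall>p\<in>P. homog_poly p" and Y: "Y = {x. x \<noteq> 0 \<and> (\<forall>p\<in>P. p x = 0)}"
    using assms(1) by (rule proj_closedE)
  show ?thesis
  proof (cases "\<forall>p\<in>P. \<forall>s. p (s *s u + v) = 0")
    case True
    have "proj_line u v \<subseteq> Y"
    proof
      fix w assume "w \<in> proj_line u v"
      then obtain s t where "w = s *s u + t *s v" "w \<noteq> 0" unfolding proj_line_def by blast
      moreover have "p (s *s u + t *s v) = 0" if p: "p \<in> P" for p
      proof (rule homog_poly_zero_on_line)
        show "homog_poly p" using P p by blast
        show "p (r *s u + v) = 0" for r using True p by blast
      qed
      ultimately show "w \<in> Y" unfolding Y by blast
    qed
    then show ?thesis using assms(2) by blast
  next
    case False
    then obtain p s\<^sub>0 where p: "p \<in> P" "p (s\<^sub>0 *s u + v) \<noteq> 0" by blast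
    have "homog_poly p" using P p(1) by blast
    from homog_poly_zeros_on_line_finite[OF this p(2)]
    obtain X where "finite X" "{w \<in> proj_line u v. p w = 0} \<subseteq> \<Union>(proj_point ` X)"
      by blast
    moreover have "Y \<subseteq> {w \<in> proj_line u v. p w = 0}"
    proof
      fix w assume "w \<in> Y"
      then show "w \<in> {w \<in> proj_line u v. p w = 0}" using assms(2) p(1) unfolding Y by auto
    qed
    ultimately show ?thesis by blast
  qed
qed

lemma proj_irred_subset_Union_points:
  assumes "finite X" "proj_irred Y" "Y \<subseteq> \<Union>(proj_point ` X)"
  shows "\<exists>x\<in>X. Y = proj_point x"
  using assms(1,3)
proof (induction X rule: finite_induct)
  case empty
  then show ?case using assms(2) unfolding proj_irred_def by simp
next
  case (insert x X)
  have closed: "proj_closed Y" "Y \<noteq> {}" using assms(2) unfolding proj_irred_def by blast+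
  have "Y = (Y \<inter> proj_point x) \<union> (Y \<inter> \<Union>(proj_point ` X))" using insert.prems by blast
  moreover have "proj_closed (Y \<inter> proj_point x)" "proj_closed (Y \<inter> \<Union>(proj_point ` X))"
    using proj_closed_Int[OF closed(1) proj_closed_point]
      proj_closed_Int[OF closed(1) proj_closed_Union_points[OF insert.hyps(1)]] by blast+
  ultimately have "Y = Y \<inter> proj_point x \<or> Y = Y \<inter> \<Union>(proj_point ` X)"
    using assms(2) unfolding proj_irred_def by blast
  then show ?case
  proof
    assume "Y = Y \<inter> proj_point x"
    then have "Y = proj_point x" using proj_closed_subset_point closed by blast
    then show ?case by blast
  next
    assume "Y = Y \<inter> \<Union>(proj_point ` X)"
    then show ?case using insert.IH by blast
  qed
qed

lemma proj_irred_psubset_line: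
  assumes "proj_irred C" "C \<subset> D" "D \<subseteq> proj_line u v"
  shows "\<exists>x. C = proj_point x"
proof -
  have "proj_closed C" using assms(1) unfolding proj_irred_def by blast
  with assms(2,3) obtain X where "finite X" "C \<subseteq> \<Union>(proj_point ` X)"
    using proj_closed_subset_line_cases[of C u v] by blast
  then show ?thesis using proj_irred_subset_Union_points[OF _ assms(1)] by blast
qed

lemma proj_codim_ge_2_if_subset_line:
  assumes "Z \<subseteq> proj_line u v" shows "proj_codim_ge Z 2"
  unfolding proj_codim_ge_def
proof (intro allI impI)
  fix n assume "proj_dim_ge Z n"
  then obtain C where C: "\<And>k. k \<le> n \<Longrightarrow> proj_irred (C k) \<and> C k \<subseteq> Z"
    and chain: "\<And>k. k < n \<Longrightarrow> C k \<subset> C (Suc k)"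
    unfolding proj_dim_ge_def by blast
  \<comment> \<open>In a chain C 0 \<subset> C 1 \<subset> C 2 inside a line, C 1 is a proper closed subset of the
    line, hence a point, which leaves no room for C 0.\<close>
  show "n + 2 \<le> 3"
  proof (rule ccontr)
    assume "\<not> n + 2 \<le> 3"
    then have n: "2 \<le> n" by simp
    have "C 1 \<subset> C 2" "C 2 \<subseteq> proj_line u v"
      using chain[of 1] C[of 2] n assms by (auto simp: numeral_2_eq_2)
    moreover have "proj_irred (C 1)" using C[of 1] n by simp
    ultimately obtain x where x: "C 1 = proj_point x"
      using proj_irred_psubset_line by blast
    have "C 0 \<subset> C 1" using chain[of 0] n by simp
    moreover have "proj_closed (C 0)" "C 0 \<noteq> {}" using C[of 0] unfolding proj_irred_def by auto
    ultimately have "C 0 = C 1" using proj_closed_subset_point x by blast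
    then show False using \<open>C 0 \<subset> C 1\<close> by blast
  qed
qed

section \<open>Kernels of antisymmetric matrices\<close>

lemma cramer_rule_2:
  fixes a b c d x y r s :: "'a::field"
  assumes "a * d - b * c \<noteq> 0" "a * x + b * y + r = 0" "c * x + d * y + s = 0"
  shows "x = (b * s - d * r) / (a * d - b * c)" "y = (c * r - a * s) / (a * d - b * c)"
proof -
  have "(a * d - b * c) * x = b * s - d * r" "(a * d - b * c) * y = c * r - a * s"
    using assms(2,3) by algebra+
  then show "x = (b * s - d * r) / (a * d - b * c)" "y = (c * r - a * s) / (a * d - b * c)"
    using assms(1) by (simp_all add: eq_divide_eq mult.commute)
qed

lemma UNIV_4_eq_distinct_insert:
  fixes i j :: 4 assumes "i \<noteq> j"
  obtains p q where "distinct [i, j, p, q]" "UNIV = {i, j, p, q}"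
proof -
  have "card (UNIV - {i, j}) = 2" using assms by (simp add: card_Diff_subset)
  then obtain p q where pq: "UNIV - {i, j} = {p, q}" "p \<noteq> q" by (meson card_2_iff)
  then have "distinct [i, j, p, q]" using assms by auto
  moreover have "UNIV = {i, j, p, q}" using pq by blast
  ultimately show ?thesis using that by blast
qed

lemma common_zeros_of_two_forms_in_line:
  fixes a b :: "'a::field^4"
  assumes D: "a $ i * b $ j - a $ j * b $ i \<noteq> 0"
  shows "\<exists>u v. \<forall>l. (\<Sum>k\<in>UNIV. a $ k * l $ k) = 0 \<and> (\<Sum>k\<in>UNIV. b $ k * l $ k) = 0
           \<longrightarrow> (\<exists>s t. l = s *s u + t *s v)"
proof -
  define D where "D = a $ i * b $ j - a $ j * b $ i"
  have "i \<noteq> j" using assms by auto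
  then obtain p q where pq: "distinct [i, j, p, q]" and UNIV: "UNIV = {i, j, p, q}"
    by (rule UNIV_4_eq_distinct_insert)
  \<comment> \<open>w r is the common zero with l $ r = 1 and the other free coordinate 0.\<close>
  define w where "w r = axis r 1 + ((a $ j * b $ r - b $ j * a $ r) / D) *s axis i 1
                              + ((b $ i * a $ r - a $ i * b $ r) / D) *s axis j 1" for r
  have "l = l $ p *s w p + l $ q *s w q"
    if "(\<Sum>k\<in>UNIV. a $ k * l $ k) = 0" "(\<Sum>k\<in>UNIV. b $ k * l $ k) = 0" for l
  proof -
    have "a $ i * l $ i + a $ j * l $ j + (a $ p * l $ p + a $ q * l $ q) = 0"
      "b $ i * l $ i + b $ j * l $ j + (b $ p * l $ p + b $ q * l $ q) = 0"
      using that pq unfolding UNIV by (simp_all add: add.assoc)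
    from cramer_rule_2[OF D this] have
      li: "l $ i = (a $ j * (b $ p * l $ p + b $ q * l $ q)
                    - b $ j * (a $ p * l $ p + a $ q * l $ q)) / D" and
      lj: "l $ j = (b $ i * (a $ p * l $ p + a $ q * l $ q)
                    - a $ i * (b $ p * l $ p + b $ q * l $ q)) / D"
      unfolding D_def by simp_all
    show ?thesis
    proof (rule iffD2[OF vec_eq_iff], rule allI)
      fix m
      have "m \<in> {i, j, p, q}" unfolding UNIV[symmetric] by simp
      then show "l $ m = (l $ p *s w p + l $ q *s w q) $ m"
      proof (elim insertE emptyE)
        assume "m = i"
        then show ?thesis using li pq
          by (auto simp: w_def axis_def add_divide_distrib diff_divide_distrib algebra_simps)
      next
        assume "m = j"
        then show ?thesis using lj pq
          by (auto simp: w_def axis_def add_divide_distrib diff_divide_distrib algebra_simps)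
      qed (use pq in \<open>auto simp: w_def axis_def\<close>)
    qed
  qed
  then show ?thesis by blast
qed

lemma antisym_kernel_in_line:
  fixes P :: "'a::field_char_0^4^4"
  assumes "transpose P = - P" "P \<noteq> 0"
  shows "\<exists>u v. \<forall>l. P *v l = 0 \<longrightarrow> (\<exists>s t. l = s *s u + t *s v)"
proof -
  obtain i j where Pij: "P $ i $ j \<noteq> 0" using assms(2) by (auto simp: vec_eq_iff)
  have anti: "P $ k $ m = - P $ m $ k" for k m
  proof -
    have "transpose P $ m $ k = (- P) $ m $ k" using assms(1) by simp
    then show ?thesis unfolding transpose_def by simp
  qed
  have "P $ i $ i = 0" "P $ j $ j = 0" using anti[of i i] anti[of j j] by simp_all
  then have "P $ i $ i * P $ j $ j - P $ i $ j * P $ j $ i \<noteq> 0"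
    using Pij anti[of j i] by simp
  then obtain u v where uv: "\<forall>l. (\<Sum>k\<in>UNIV. P $ i $ k * l $ k) = 0 \<and> (\<Sum>k\<in>UNIV. P $ j $ k * l $ k) = 0
      \<longrightarrow> (\<exists>s t. l = s *s u + t *s v)"
    using common_zeros_of_two_forms_in_line[of "P $ i" i "P $ j" j] by blast
  have "(\<Sum>k\<in>UNIV. P $ m $ k * l $ k) = 0" if "P *v l = 0" for l m
    using that by (simp add: vec_eq_iff matrix_vector_mult_def)
  then show ?thesis using uv by blast
qed

lemma transpose_mult_nonzero:
  fixes M :: "'a::field^'n^'n" and N :: "'a^'k^'n"
  assumes "\<And>x. M *v x = 0 \<Longrightarrow> x = 0" "N \<noteq> 0"
  shows "transpose M ** N \<noteq> 0"
proof
  assume MN: "transpose M ** N = 0"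
  have "\<exists>B. B ** M = mat 1" unfolding matrix_left_invertible_ker using assms(1) by blast
  then obtain B where "M ** B = mat 1" using matrix_left_right_inverse by blast
  then have "transpose (M ** B) = mat 1" by simp
  then have "transpose B ** transpose M = mat 1" by (simp add: matrix_transpose_mul)
  then have "N = transpose B ** (transpose M ** N)" by (simp add: matrix_mul_assoc)
  then show False using MN assms(2) by simp
qed

lemma proj_codim_ge_2_kernel:
  fixes A P :: "complex^4^4"
  assumes "P \<noteq> 0" "transpose P = - P" "\<And>l. A *v l = 0 \<Longrightarrow> P *v l = 0"
  shows "proj_codim_ge {l. l \<noteq> 0 \<and> A *v l = 0} 2"
proof -
  obtain u v where "\<forall>l. P *v l = 0 \<longrightarrow> (\<exists>s t. l = s *s u + t *s v)"
    using antisym_kernel_in_line[OF assms(2,1)] by blast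
  then have "{l. l \<noteq> 0 \<and> A *v l = 0} \<subseteq> proj_line u v"
    using assms(3) unfolding proj_line_def by blast
  then show ?thesis by (rule proj_codim_ge_2_if_subset_line)
qed

section \<open>The representation\<close>

text \<open>Column k of f_matrix F is the vector F k and column k of g_matrix G is the row G k,
  so the pairing G i ** F j is entry (i, j) of transpose (g_matrix G) ** f_matrix F.\<close>

definition f_matrix :: "(4 \<Rightarrow> complex^1^4) \<Rightarrow> complex^4^4" where
  "f_matrix F = (\<chi> m k. F k $ m $ 1)"

definition g_matrix :: "(4 \<Rightarrow> complex^4^1) \<Rightarrow> complex^4^4" where
  "g_matrix G = (\<chi> m k. G k $ 1 $ m)"

lemma sum_f_eq: "sum_f F l x = x $ 1 *s (f_matrix F *v l)"
proof (rule iffD2[OF vec_eq_iff], rule allI)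
  fix m
  have "(F i *v x) $ m = F i $ m $ 1 * x $ 1" for i by (simp add: matrix_vector_mult_def)
  then have "sum_f F l x $ m = (\<Sum>i\<in>UNIV. x $ 1 * (F i $ m $ 1 * l $ i))"
    unfolding sum_f_def by (simp add: sum_component mult_ac)
  also have "\<dots> = (x $ 1 *s (f_matrix F *v l)) $ m"
    by (simp add: f_matrix_def matrix_vector_mult_def sum_distrib_left)
  finally show "sum_f F l x $ m = (x $ 1 *s (f_matrix F *v l)) $ m" .
qed

lemma sum_g_eq: "sum_g G l v = (\<chi> _. \<Sum>m\<in>UNIV. (g_matrix G *v l) $ m * v $ m)"
proof -
  have "(\<Sum>i\<in>UNIV. l $ i * (\<Sum>m\<in>UNIV. G i $ 1 $ m * v $ m))
      = (\<Sum>i\<in>UNIV. \<Sum>m\<in>UNIV. G i $ 1 $ m * l $ i * v $ m)"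
    by (simp add: sum_distrib_left mult_ac)
  also have "\<dots> = (\<Sum>m\<in>UNIV. \<Sum>i\<in>UNIV. G i $ 1 $ m * l $ i * v $ m)"
    by (rule sum.swap)
  also have "\<dots> = (\<Sum>m\<in>UNIV. (\<Sum>i\<in>UNIV. G i $ 1 $ m * l $ i) * v $ m)"
    by (simp add: sum_distrib_right)
  finally show ?thesis
    unfolding sum_g_def g_matrix_def
    by (simp add: vec_eq_iff matrix_vector_mult_def sum_component)
qed

lemma inj_sum_f_iff: "inj (sum_f F l) \<longleftrightarrow> f_matrix F *v l \<noteq> 0"
proof
  assume "inj (sum_f F l)"
  moreover have "(0::complex^1) \<noteq> (\<chi> _. 1)" by (simp add: vec_eq_iff)
  ultimately have "sum_f F l 0 \<noteq> sum_f F l (\<chi> _. 1)" unfolding inj_def by blast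
  then show "f_matrix F *v l \<noteq> 0" unfolding sum_f_eq by auto
next
  assume w: "f_matrix F *v l \<noteq> 0"
  show "inj (sum_f F l)"
  proof (rule injI)
    fix x y assume "sum_f F l x = sum_f F l y"
    then have "x $ 1 = y $ 1" using w unfolding sum_f_eq by simp
    then show "x = y" by (simp add: vec_eq_iff)
  qed
qed

lemma surj_sum_g_iff: "surj (sum_g G l) \<longleftrightarrow> g_matrix G *v l \<noteq> 0"
proof
  assume "surj (sum_g G l)"
  then obtain v where v: "sum_g G l v = (\<chi> _. 1)" by (metis surjD)
  show "g_matrix G *v l \<noteq> 0"
  proof
    assume "g_matrix G *v l = 0"
    then have "sum_g G l v = 0" unfolding sum_g_eq by (simp add: vec_eq_iff)
    then show False using v by (simp add: vec_eq_iff)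
  qed
next
  assume "g_matrix G *v l \<noteq> 0"
  then obtain m where m: "(g_matrix G *v l) $ m \<noteq> 0" by (auto simp: vec_eq_iff)
  show "surj (sum_g G l)"
  proof (rule surjI)
    fix y :: "complex^1"
    show "sum_g G l ((y $ 1 / (g_matrix G *v l) $ m) *s axis m 1) = y"
      unfolding sum_g_eq using m
      by (simp add: vec_eq_iff axis_def if_distrib[of "\<lambda>z. _ * z"] cong: if_cong)
  qed
qed

lemma f_matrix_eq_0_iff: "f_matrix F = 0 \<longleftrightarrow> (\<forall>i. F i = 0)"
  by (auto simp: f_matrix_def vec_eq_iff)

lemma g_matrix_eq_0_iff: "g_matrix G = 0 \<longleftrightarrow> (\<forall>i. G i = 0)"
  by (auto simp: g_matrix_def vec_eq_iff)

lemma is_rep_pairing_antisym: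
  assumes "is_rep F G"
  shows "transpose (f_matrix F) ** g_matrix G = - (transpose (g_matrix G) ** f_matrix F)"
proof -
  have fg: "(transpose (f_matrix F) ** g_matrix G) $ i $ j = (G j ** F i) $ 1 $ 1" for i j
    by (simp add: matrix_matrix_mult_def transpose_def f_matrix_def g_matrix_def mult.commute)
  have gf: "(transpose (g_matrix G) ** f_matrix F) $ i $ j = (G i ** F j) $ 1 $ 1" for i j
    by (simp add: matrix_matrix_mult_def transpose_def f_matrix_def g_matrix_def)
  have "(G j ** F i + G i ** F j) $ 1 $ 1 = 0" for i j using assms unfolding is_rep_def by simp
  then have "(G j ** F i) $ 1 $ 1 = - (G i ** F j) $ 1 $ 1" for i j by (simp add: eq_neg_iff_add_eq_0)
  then show ?thesis unfolding vec_eq_iff vector_uminus_component fg gf by blast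
qed

lemma loc_inj_if_glob_surj:
  assumes "is_rep F G" "glob_surj G"
  shows "loc_inj F \<or> (\<forall>i. F i = 0)"
proof (rule disjCI)
  assume "\<not> (\<forall>i. F i = 0)"
  let ?P = "transpose (g_matrix G) ** f_matrix F"
  have "g_matrix G *v l = 0 \<Longrightarrow> l = 0" for l
    using assms(2) surj_sum_g_iff unfolding glob_surj_def by blast
  moreover have "f_matrix F \<noteq> 0" using \<open>\<not> (\<forall>i. F i = 0)\<close> by (simp add: f_matrix_eq_0_iff)
  ultimately have "?P \<noteq> 0" by (rule transpose_mult_nonzero)
  moreover have "transpose ?P = - ?P"
    using is_rep_pairing_antisym[OF assms(1)] by (simp add: matrix_transpose_mul)
  moreover have "?P *v l = 0" if "f_matrix F *v l = 0" for l
    using that by (simp add: matrix_vector_mul_assoc[symmetric])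
  ultimately have "proj_codim_ge {l. l \<noteq> 0 \<and> f_matrix F *v l = 0} 2"
    by (rule proj_codim_ge_2_kernel)
  then show "loc_inj F"
    unfolding loc_inj_def by (auto intro!: exI proj_closed_kernel simp: inj_sum_f_iff)
qed

lemma loc_surj_if_glob_inj:
  assumes "is_rep F G" "glob_inj F"
  shows "loc_surj G \<or> (\<forall>i. G i = 0)"
proof (rule disjCI)
  assume "\<not> (\<forall>i. G i = 0)"
  let ?P = "transpose (f_matrix F) ** g_matrix G"
  have "f_matrix F *v l = 0 \<Longrightarrow> l = 0" for l
    using assms(2) inj_sum_f_iff unfolding glob_inj_def by blast
  moreover have "g_matrix G \<noteq> 0" using \<open>\<not> (\<forall>i. G i = 0)\<close> by (simp add: g_matrix_eq_0_iff)
  ultimately have "?P \<noteq> 0" by (rule transpose_mult_nonzero)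
  moreover have "transpose ?P = - ?P"
  proof -
    have "transpose ?P = transpose (g_matrix G) ** f_matrix F" by (simp add: matrix_transpose_mul)
    also have "\<dots> = - ?P" using is_rep_pairing_antisym[OF assms(1)] by simp
    finally show ?thesis .
  qed
  moreover have "?P *v l = 0" if "g_matrix G *v l = 0" for l
    using that by (simp add: matrix_vector_mul_assoc[symmetric])
  ultimately have "proj_codim_ge {l. l \<noteq> 0 \<and> g_matrix G *v l = 0} 2"
    by (rule proj_codim_ge_2_kernel)
  then show "loc_surj G"
    unfolding loc_surj_def by (auto intro!: exI proj_closed_kernel simp: surj_sum_g_iff)
qed

lemma singleton_0_neq_UNIV: "({0} :: ('a::zero_neq_one^'n) set) \<noteq> UNIV"
proof -
  have "(\<chi> _. (1 :: 'a)) \<noteq> 0" by (simp add: vec_eq_iff)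
  then show ?thesis by blast
qed

lemma not_theta_stable_if_arrows_vanish:
  assumes "(\<forall>i. F i = 0) \<or> (\<forall>i. G i = 0)"
  shows "\<not> theta_stable F G \<theta>"
proof
  assume stable: "theta_stable F G \<theta>"
  let ?V1 = "UNIV :: (complex^1) set" and ?V0 = "UNIV :: (complex^4) set"
  let ?Z1 = "{0} :: (complex^1) set" and ?Z0 = "{0} :: (complex^4) set"
  have neg: "theta_pair \<theta> (vec.dim S1, vec.dim S0, vec.dim S2) < 0"
    if "is_subrep F G S1 S0 S2" "S1 \<noteq> {0} \<or> S0 \<noteq> {0} \<or> S2 \<noteq> {0}"
      "S1 \<noteq> UNIV \<or> S0 \<noteq> UNIV \<or> S2 \<noteq> UNIV" for S1 S0 S2
    using stable that unfolding theta_stable_def by (elim conjE allE impE) auto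
  have total: "theta_pair \<theta> (1, 4, 1) = 0" using stable unfolding theta_stable_def by blast
  have dims: "vec.dim ?V1 = 1" "vec.dim ?V0 = 4" "vec.dim ?Z1 = 0" "vec.dim ?Z0 = 0"
    by (simp_all add: card_cart_basis vec.dim_singleton)
  have ne: "?Z1 \<noteq> ?V1" "?Z0 \<noteq> ?V0" by (rule singleton_0_neq_UNIV)+
  note sub = vec.subspace_single_0 vec.subspace_UNIV
  from assms show False
  proof
    assume "\<forall>i. F i = 0"
    then have "is_subrep F G ?V1 ?Z0 ?Z1" "is_subrep F G ?Z1 ?V0 ?V1"
      unfolding is_subrep_def using sub by simp_all
    then have "theta_pair \<theta> (1, 0, 0) < 0" "theta_pair \<theta> (0, 4, 1) < 0"
      using neg[of ?V1 ?Z0 ?Z1] neg[of ?Z1 ?V0 ?V1] ne unfolding dims by auto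
    then show False using total unfolding theta_pair_def by simp
  next
    assume "\<forall>i. G i = 0"
    then have "is_subrep F G ?Z1 ?Z0 ?V1" "is_subrep F G ?V1 ?V0 ?Z1"
      unfolding is_subrep_def using sub by simp_all
    then have "theta_pair \<theta> (0, 0, 1) < 0" "theta_pair \<theta> (1, 4, 0) < 0"
      using neg[of ?Z1 ?Z0 ?V1] neg[of ?V1 ?V0 ?Z1] ne unfolding dims by auto
    then show False using total unfolding theta_pair_def by simp
  qed
qed

theorem mainTheorem11:
  fixes F :: "4 \<Rightarrow> complex^1^4" and G :: "4 \<Rightarrow> complex^4^1" and \<alpha> \<gamma> :: real
  assumes "is_rep F G"
    and "(glob_surj G \<and> \<not> loc_inj F) \<or> (glob_inj F \<and> \<not> loc_surj G)"
  shows "\<not> theta_stable F G (\<alpha>, - (\<alpha> + \<gamma>) / 4, \<gamma>)"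
proof -
  have "(\<forall>i. F i = 0) \<or> (\<forall>i. G i = 0)"
    using assms(2) loc_inj_if_glob_surj[OF assms(1)] loc_surj_if_glob_inj[OF assms(1)] by blast
  then show ?thesis by (rule not_theta_stable_if_arrows_vanish)
qed

end
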